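(* Let $K\ge 1$ and $B\in\{1,\dots,K\}$ be integers, and put $K'=\lfloor K/B\rfloor$. Let $h_1,\dots,h_K,g_1,\dots,g_K,h_d$ be independent $\mathcal{CN}(0,1)$ random variables, set $v_k=h_kg_k$ for $k=1,\dots,K$, and for $i=1,\dots,K'$ set $v'_i=\sum_{b=1}^{B}v_{b+(i-1)B}$; write $\mathbf v'=(v'_1,\dots,v'_{K'})^T$. Let $\beta_d,\beta_l>0$, $P_{\rm tr}>0$, $\sigma^2>0$, $\gamma>0$, and let $T_c$ be an integer with $T_c>K'+1$. Pilot phase and estimates: put $T_p=K'+1$. Let $\Phi\in\mathbb C^{T_p\times T_p}$ be the DFT matrix $\Phi_{m,k}=e^{-j2\pi(m-1)(k-1)/T_p}$ ($m,k=1,\dots,T_p$), and write its $m$-th row as $[1,\boldsymbol\phi_m^T]$ with $\boldsymbol\phi_m\in\mathbb C^{K'}$. For $m=1,\dots,T_p$ let $y_m=\sqrt{P_{\rm tr}}\big(\sqrt{\beta_d}\,h_d+\sqrt{\beta_l}\,\boldsymbol\phi_m^T\mathbf v'\big)x_m+n_m$, where $x_m\in\mathbb C$ are fixed with $|x_m|=1$ and $n_1,\dots,n_{T_p}$ are i.i.d. $\mathcal{CN}(0,\sigma^2)$, independent of all channels. Define the least-squares estimates $\hat h_d,\hat{\mathbf v}'=(\hat v'_1,\dots,\hat v'_{K'})^T$ by $\big(\sqrt{\beta_d}\,\hat h_d,\ \sqrt{\beta_l}\,\hat{\mathbf v}'^T\big)^T=\frac{1}{\sqrt{P_{\rm tr}}}\Phi^{-1}\big(y_1x_1^*,\dots,y_{T_p}x_{T_p}^*\big)^T,$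 and define $\hat{\boldsymbol\phi}=(\hat\phi_1,\dots,\hat\phi_{K'})^T$ by $\hat\phi_i=e^{j\arg(\hat h_d/\hat v'_i)}$. Define the average achievable rate $R=\Big(1-\frac{K'+1}{T_c}\Big)\,\mathbb E\Big[\log_2\Big(1+\gamma\,\big|\sqrt{\beta_d}\,h_d+\sqrt{\beta_l}\,\hat{\boldsymbol\phi}^T\mathbf v'\big|^2\Big)\Big].$ Then $R\le\bar R$, where $\bar R=\Big(1-\frac{K'+1}{T_c}\Big)\log_2\Big(1+\gamma\big(\xi_1K'^2+\xi_2K'+\beta_d\big)\Big),$ with $\xi_1=\beta_l z^2$, $\xi_2=\beta_l(B-z^2)+\sqrt{\pi\beta_d\beta_l}\,z$, and $z=\frac{\sqrt{\pi}\,\Gamma(B+\tfrac12)}{2\,\Gamma(B)}.$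
   Context: $\mathcal{CN}(0,s)$ denotes a circularly-symmetric complex Gaussian with variance $s$; $j=\sqrt{-1}$; $\arg$ is the complex argument; $\Gamma$ is the Gamma function; $x^*$ is complex conjugation. Physically, $h_k,g_k$ are source–RIS and destination–RIS fading coefficients of a $K$-element reconfigurable intelligent surface whose elements are grouped into $K'$ groups of $B$ neighbouring elements sharing a common phase shift, $h_d$ is the direct-link coefficient, $\beta_d,\beta_l$ are path-loss coefficients, $\gamma$ is the transmit SNR and $T_c$ the coherence block length (in symbols). *)

theory Defs
  imports "HOL-Probability.Probability"
begin

text \<open>Index type for the independent Gaussian sources:
  H k = h_(k+1), G k = g_(k+1), Hd = h_d, N m = n_(m+1)  (0-based indices).\<close>
datatype chan_idx = H nat | G nat | Hd | N nat

definition CN_distributed :: "'a measure \<Rightarrow> ('a \<Rightarrow> complex) \<Rightarrow> real \<Rightarrow> bool" where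
  "CN_distributed M X s \<longleftrightarrow>
     distributed M lborel X (\<lambda>z. ennreal (exp (- (cmod z)\<^sup>2 / s) / (pi * s)))"

text \<open>DFT matrix of size T (0-based): Phi m k = exp(-j 2 pi m k / T).\<close>
definition dft :: "nat \<Rightarrow> nat \<Rightarrow> nat \<Rightarrow> complex" where
  "dft T m k = cis (- 2 * pi * real m * real k / real T)"

definition mat_inv :: "nat \<Rightarrow> (nat \<Rightarrow> nat \<Rightarrow> complex) \<Rightarrow> (nat \<Rightarrow> nat \<Rightarrow> complex)" where
  "mat_inv n A = (THE C. (\<forall>i j. (n \<le> i \<or> n \<le> j) \<longrightarrow> C i j = 0) \<and>
      (\<forall>i<n. \<forall>j<n. (\<Sum>k<n. A i k * C k j) = (if i = j then 1 else 0)) \<and>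
      (\<forall>i<n. \<forall>j<n. (\<Sum>k<n. C i k * A k j) = (if i = j then 1 else 0)))"

text \<open>v'_(i+1) = sum_(b=1..B) h_(b+iB) g_(b+iB), i = 0..K'-1 (0-based).\<close>
definition vgrp :: "(chan_idx \<Rightarrow> 'a \<Rightarrow> complex) \<Rightarrow> nat \<Rightarrow> nat \<Rightarrow> 'a \<Rightarrow> complex" where
  "vgrp Z B i \<omega> = (\<Sum>b<B. Z (H (b + i * B)) \<omega> * Z (G (b + i * B)) \<omega>)"

text \<open>Received pilot y_(m+1), m = 0..Tp-1, with Tp = K'+1.\<close>
definition pilot_y :: "(chan_idx \<Rightarrow> 'a \<Rightarrow> complex) \<Rightarrow> nat \<Rightarrow> nat \<Rightarrow> real \<Rightarrow> real \<Rightarrow> real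
    \<Rightarrow> (nat \<Rightarrow> complex) \<Rightarrow> nat \<Rightarrow> 'a \<Rightarrow> complex" where
  "pilot_y Z B K' P \<beta>d \<beta>l x m \<omega> =
     complex_of_real (sqrt P) *
       (complex_of_real (sqrt \<beta>d) * Z Hd \<omega> +
        complex_of_real (sqrt \<beta>l) * (\<Sum>i<K'. dft (K'+1) m (i+1) * vgrp Z B i \<omega>)) * x m
     + Z (N m) \<omega>"

text \<open>Least-squares vector (sqrt(beta_d) hhat_d, sqrt(beta_l) vhat'^T)^T, entries 0..K'.\<close>
definition ls_est :: "(chan_idx \<Rightarrow> 'a \<Rightarrow> complex) \<Rightarrow> nat \<Rightarrow> nat \<Rightarrow> real \<Rightarrow> real \<Rightarrow> real
    \<Rightarrow> (nat \<Rightarrow> complex) \<Rightarrow> nat \<Rightarrow> 'a \<Rightarrow> complex" where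
  "ls_est Z B K' P \<beta>d \<beta>l x k \<omega> =
     (\<Sum>m<K'+1. mat_inv (K'+1) (dft (K'+1)) k m *
        (pilot_y Z B K' P \<beta>d \<beta>l x m \<omega> * cnj (x m))) / complex_of_real (sqrt P)"

definition hd_hat where
  "hd_hat Z B K' P \<beta>d \<beta>l x \<omega> = ls_est Z B K' P \<beta>d \<beta>l x 0 \<omega> / complex_of_real (sqrt \<beta>d)"

definition v_hat where
  "v_hat Z B K' P \<beta>d \<beta>l x i \<omega> = ls_est Z B K' P \<beta>d \<beta>l x (i+1) \<omega> / complex_of_real (sqrt \<beta>l)"

definition phi_hat where
  "phi_hat Z B K' P \<beta>d \<beta>l x i \<omega> =
     cis (Arg (hd_hat Z B K' P \<beta>d \<beta>l x \<omega> / v_hat Z B K' P \<beta>d \<beta>l x i \<omega>))"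

definition eff_gain where
  "eff_gain Z B K' P \<beta>d \<beta>l x \<omega> =
     (cmod (complex_of_real (sqrt \<beta>d) * Z Hd \<omega> +
        complex_of_real (sqrt \<beta>l) * (\<Sum>i<K'. phi_hat Z B K' P \<beta>d \<beta>l x i \<omega> * vgrp Z B i \<omega>)))\<^sup>2"

end

(*
  Every phase estimate has modulus one, so by the triangle inequality the effective gain is at most
  W = (sqrt(beta_d) |h_d| + sqrt(beta_l) (|v'_1| + ... + |v'_K'|))^2, whatever the pilots, the noise
  and the estimator. Jensen's inequality for the concave map w -> log(1 + gamma w) bounds the
  expected rate by log(1 + gamma E W). The magnitudes |h_d|, |v'_1|, ..., |v'_K'| are functions of
  disjoint sets of independent channels, so E W is determined by their first two moments. Given
  g_1, ..., g_B, the sum v'_i is a circularly-symmetric Gaussian of variance |g_1|^2 + ... + |g_B|^2,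
  and that variance is Erlang distributed; hence E |v'_i|^q = Gamma(q/2 + 1) Gamma(q/2 + B) / Gamma(B),
  so E |v'_i| = z and E |v'_i|^2 = B, while E |h_d| = sqrt(pi)/2 and E |h_d|^2 = 1.
*)

theory Submission
  imports Defs "HOL-Analysis.Ball_Volume"
begin

section \<open>Radial integrals over the complex plane\<close>

lemma emeasure_lborel_cmod_power2_le:
  assumes "0 \<le> a"
  shows "emeasure (lborel :: complex measure) {w. (cmod w)\<^sup>2 \<le> a} = ennreal (pi * a)"
proof -
  have "{w::complex. (cmod w)\<^sup>2 \<le> a} = cball 0 (sqrt a)"
    using assms by (auto simp: dist_norm intro: real_le_rsqrt)
       (metis norm_ge_zero power_mono real_sqrt_pow2)
  then show ?thesis
    using assms emeasure_cball[of "sqrt a" "0::complex"] by (simp add: unit_ball_vol_2)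
qed

lemma distr_lborel_cmod_power2:
  "distr (lborel :: complex measure) borel (\<lambda>w. (cmod w)\<^sup>2) =
     density lborel (\<lambda>r. ennreal pi * indicator {0..} r)"
proof (rule measure_eqI_generator_eq_countable[where E="range atMost" and \<Omega>=UNIV
      and A="range (\<lambda>n::nat. {..real n})"])
  have sets_borel: "sets (borel :: real measure) = sigma_sets UNIV (range atMost)"
    by (subst borel_eq_atMost) (simp add: sets_measure_of)
  show "sets (distr (lborel :: complex measure) borel (\<lambda>w. (cmod w)\<^sup>2)) = sigma_sets UNIV (range atMost)"
    using sets_borel by simp
  show "sets (density lborel (\<lambda>r. ennreal pi * indicator {0..} r)) = sigma_sets UNIV (range (atMost :: real \<Rightarrow> _))"
    using sets_borel by simp
  have distr_atMost: "emeasure (distr (lborel :: complex measure) borel (\<lambda>w. (cmod w)\<^sup>2)) {..a}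
      = emeasure lborel {w::complex. (cmod w)\<^sup>2 \<le> a}" for a
    by (subst emeasure_distr) (auto simp: vimage_def)
  have density_atMost: "emeasure (density lborel (\<lambda>r. ennreal pi * indicator {0..} r)) {..a}
      = (\<integral>\<^sup>+r. ennreal pi * indicator {0..a} r \<partial>lborel)" for a :: real
    by (subst emeasure_density) (auto intro!: nn_integral_cong split: split_indicator)
  have "emeasure (distr (lborel :: complex measure) borel (\<lambda>w. (cmod w)\<^sup>2)) {..a} =
        emeasure (density lborel (\<lambda>r. ennreal pi * indicator {0..} r)) {..a}" for a :: real
  proof (cases "0 \<le> a")
    case True
    then show ?thesis
      by (simp add: distr_atMost density_atMost emeasure_lborel_cmod_power2_le nn_integral_cmult
          ennreal_mult)
  next
    case False
    then have "{w::complex. (cmod w)\<^sup>2 \<le> a} = {}"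
      by (auto simp: not_le) (meson less_le_trans zero_le_power2)
    with False show ?thesis
      by (simp add: distr_atMost density_atMost)
  qed
  then show "X \<in> range atMost \<Longrightarrow> emeasure (distr lborel borel (\<lambda>w. (cmod w)\<^sup>2)) X =
        emeasure (density lborel (\<lambda>r. ennreal pi * indicator {0..} r)) X" for X
    by auto
  show "emeasure (distr (lborel :: complex measure) borel (\<lambda>w. (cmod w)\<^sup>2)) A \<noteq> \<infinity>"
    if "A \<in> range (\<lambda>n::nat. {..real n})" for A
    using that by (auto simp: distr_atMost emeasure_lborel_cmod_power2_le)
  show "Int_stable (range (atMost :: real \<Rightarrow> _))"
    by (auto simp: Int_stable_def intro!: exI[of _ "min _ _"])
  show "\<Union> (range (\<lambda>n::nat. {..real n})) = UNIV"
    by (auto intro: real_arch_simple)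
qed auto

lemma nn_integral_lborel_cmod_power2:
  assumes [measurable]: "f \<in> borel_measurable borel"
  shows "(\<integral>\<^sup>+w. f ((cmod (w::complex))\<^sup>2) \<partial>lborel) =
         (\<integral>\<^sup>+r. ennreal pi * indicator {0..} r * f r \<partial>lborel)"
proof -
  have "(\<integral>\<^sup>+w. f ((cmod (w::complex))\<^sup>2) \<partial>lborel) =
        (\<integral>\<^sup>+r. f r \<partial>distr (lborel :: complex measure) borel (\<lambda>w. (cmod w)\<^sup>2))"
    by (subst nn_integral_distr) auto
  also have "\<dots> = (\<integral>\<^sup>+r. ennreal pi * indicator {0..} r * f r \<partial>lborel)"
    unfolding distr_lborel_cmod_power2 by (subst nn_integral_density) auto
  finally show ?thesis .
qed

lemma nn_integral_lborel_translate:
  fixes f :: "'a::euclidean_space \<Rightarrow> ennreal"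
  assumes [measurable]: "f \<in> borel_measurable borel"
  shows "(\<integral>\<^sup>+u. f (u + a) \<partial>lborel) = (\<integral>\<^sup>+u. f u \<partial>lborel)"
proof -
  have "(\<integral>\<^sup>+u. f u \<partial>lborel) = (\<integral>\<^sup>+u. f u \<partial>distr lborel borel ((+) a))"
    by (simp add: lborel_distr_plus)
  also have "\<dots> = (\<integral>\<^sup>+u. f (a + u) \<partial>lborel)"
    by (subst nn_integral_distr) auto
  finally show ?thesis by (simp add: add.commute)
qed

lemma nn_integral_powr_exp_Gamma:
  assumes a: "a > -1" and s: "s > 0"
  shows "(\<integral>\<^sup>+r. ennreal (indicator {0..} r * (r powr a * exp (- r / s))) \<partial>lborel)
       = ennreal (s powr (a + 1) * Gamma (a + 1))"
proof -
  define g where "g t = indicator {0..} t * (t powr a / exp t)" for t :: real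
  have "((\<lambda>t. t powr a / exp t) has_integral Gamma (a + 1)) {0..}"
    using Gamma_integral_real[of "a + 1"] a by simp
  moreover have "g = (\<lambda>t. if t \<in> {0..} then t powr a / exp t else 0)"
    by (auto simp: g_def indicator_def)
  ultimately have "(g has_integral Gamma (a + 1)) UNIV"
    by (simp only: has_integral_restrict_UNIV)
  moreover have g_measurable[measurable]: "g \<in> borel_measurable borel"
    unfolding g_def by measurable
  ultimately have Gamma: "(\<integral>\<^sup>+t. ennreal (g t) \<partial>lborel) = ennreal (Gamma (a + 1))"
    by (subst nn_integral_has_integral_lborel) (auto simp: g_def indicator_def)
  have scale: "ennreal (indicator {0..} (0 + s * t) * ((0 + s * t) powr a * exp (- (0 + s * t) / s)))
      = ennreal (s powr a) * ennreal (g t)" for t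
    using s by (cases "t \<ge> 0")
      (auto simp: g_def indicator_def powr_mult exp_minus field_simps ennreal_mult[symmetric] zero_le_mult_iff)
  have "(\<integral>\<^sup>+r. ennreal (indicator {0..} r * (r powr a * exp (- r / s))) \<partial>lborel)
      = ennreal \<bar>s\<bar> * (\<integral>\<^sup>+t. ennreal (s powr a) * ennreal (g t) \<partial>lborel)"
    using s by (subst nn_integral_real_affine[where c=s and t=0]) (simp_all only: scale, auto)
  also have "\<dots> = ennreal (s * s powr a * Gamma (a + 1))"
    using s a by (subst nn_integral_cmult) (auto simp: Gamma ennreal_mult[symmetric] Gamma_real_pos less_imp_le)
  finally show ?thesis
    using s by (simp add: powr_add mult_ac)
qed

lemma nn_integral_lborel_exp_cmod_power2:
  assumes k: "k > 0"
  shows "(\<integral>\<^sup>+y. ennreal (exp (- k * (cmod (y - m))\<^sup>2)) \<partial>lborel) = ennreal (pi / k)"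
proof -
  have "(\<integral>\<^sup>+y. ennreal (exp (- k * (cmod (y - m))\<^sup>2)) \<partial>lborel)
      = (\<integral>\<^sup>+y. (\<lambda>r. ennreal (exp (- k * r))) ((cmod (y::complex))\<^sup>2) \<partial>lborel)"
    using nn_integral_lborel_translate[of "\<lambda>y. ennreal (exp (- k * (cmod (y - m))\<^sup>2))" m] by simp
  also have "\<dots> = (\<integral>\<^sup>+r. ennreal (pi / k) * ennreal (erlang_density 0 k r) \<partial>lborel)"
    using k by (subst nn_integral_lborel_cmod_power2)
      (auto intro!: nn_integral_cong simp: erlang_density_def indicator_def ennreal_mult[symmetric])
  also have "\<dots> = ennreal (pi / k)"
    using k nn_integral_erlang_ith_moment[of k 0 0] by (simp add: nn_integral_cmult)
  finally show ?thesis .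
qed

lemma power2_powr_half:
  fixes x q :: real
  assumes "x \<ge> 0"
  shows "(x\<^sup>2) powr (q / 2) = x powr q"
proof (cases "x = 0")
  case False
  with assms have "x\<^sup>2 = x powr 2"
    by (simp add: powr_realpow)
  then show ?thesis
    by (simp add: powr_powr)
qed simp

section \<open>Circularly-symmetric complex Gaussians\<close>

definition cnormal_density :: "real \<Rightarrow> complex \<Rightarrow> real" where
  "cnormal_density s z = exp (- (cmod z)\<^sup>2 / s) / (pi * s)"

lemma cnormal_density_nonneg: "0 \<le> s \<Longrightarrow> 0 \<le> cnormal_density s z"
  by (simp add: cnormal_density_def)

lemma borel_measurable_cnormal_density[measurable]: "cnormal_density s \<in> borel_measurable borel"
  unfolding cnormal_density_def by measurable

lemma nn_integral_cnormal_density: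
  assumes "s > 0"
  shows "(\<integral>\<^sup>+w. ennreal (cnormal_density s w) \<partial>lborel) = 1"
proof -
  have "(\<integral>\<^sup>+w. ennreal (cnormal_density s w) \<partial>lborel)
      = (\<integral>\<^sup>+w. ennreal (1 / (pi * s)) * ennreal (exp (- (1 / s) * (cmod (w - 0))\<^sup>2)) \<partial>lborel)"
    using assms by (intro nn_integral_cong) (simp add: cnormal_density_def ennreal_mult[symmetric])
  also have "\<dots> = ennreal (1 / (pi * s)) * ennreal (pi / (1 / s))"
    using assms nn_integral_lborel_exp_cmod_power2[of "1 / s" 0] by (subst nn_integral_cmult) auto
  finally show ?thesis
    using assms by (simp add: ennreal_mult[symmetric])
qed

definition cnormal :: "real \<Rightarrow> complex measure" where
  "cnormal s = density lborel (\<lambda>z. ennreal (cnormal_density s z))"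

lemma sets_cnormal[simp, measurable_cong]: "sets (cnormal s) = sets borel"
  by (simp add: cnormal_def)

lemma space_cnormal[simp]: "space (cnormal s) = UNIV"
  by (simp add: cnormal_def)

lemma prob_space_cnormal: "s > 0 \<Longrightarrow> prob_space (cnormal s)"
  by (rule prob_spaceI) (simp add: cnormal_def emeasure_density nn_integral_cnormal_density)

lemma nn_integral_cnormal:
  "f \<in> borel_measurable borel \<Longrightarrow>
     (\<integral>\<^sup>+x. f x \<partial>cnormal s) = (\<integral>\<^sup>+x. ennreal (cnormal_density s x) * f x \<partial>lborel)"
  unfolding cnormal_def by (subst nn_integral_density) auto

interpretation cnormal_1: prob_space "cnormal 1"
  by (rule prob_space_cnormal) simp

interpretation cnormal_1_product: product_sigma_finite "\<lambda>_::'i. cnormal 1"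
  by (simp add: product_sigma_finite_def cnormal_1.sigma_finite_measure_axioms)

lemma nn_integral_cnormal_cmod_powr:
  assumes s: "s > 0" and q: "q > 0"
  shows "(\<integral>\<^sup>+w. ennreal ((cmod w) powr q) \<partial>cnormal s) = ennreal (s powr (q / 2) * Gamma (q / 2 + 1))"
proof -
  have "(\<integral>\<^sup>+w. ennreal ((cmod w) powr q) \<partial>cnormal s)
      = (\<integral>\<^sup>+w. (\<lambda>r. ennreal (exp (- r / s) / (pi * s)) * ennreal (r powr (q / 2))) ((cmod w)\<^sup>2) \<partial>lborel)"
    by (simp add: nn_integral_cnormal cnormal_density_def power2_powr_half)
  also have "\<dots> = (\<integral>\<^sup>+r. ennreal (1 / s) * ennreal (indicator {0..} r * (r powr (q / 2) * exp (- r / s))) \<partial>lborel)"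
    using s by (subst nn_integral_lborel_cmod_power2)
      (auto intro!: nn_integral_cong simp: indicator_def ennreal_mult[symmetric])
  also have "\<dots> = ennreal (1 / s) * ennreal (s powr (q / 2 + 1) * Gamma (q / 2 + 1))"
    using s q nn_integral_powr_exp_Gamma[of "q / 2" s] by (subst nn_integral_cmult) auto
  also have "\<dots> = ennreal (s powr (q / 2) * Gamma (q / 2 + 1))"
    using s q by (subst ennreal_mult[symmetric]) (auto simp: powr_add Gamma_real_pos less_imp_le)
  finally show ?thesis .
qed

lemma CN_distributed_distr:
  "CN_distributed M X s \<Longrightarrow> distr M borel X = cnormal s"
  unfolding CN_distributed_def distributed_def cnormal_def cnormal_density_def
  by (metis distr_cong sets_lborel)

lemma CN_distributed_measurable:
  "CN_distributed M X s \<Longrightarrow> X \<in> borel_measurable M"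
  by (auto simp: CN_distributed_def distributed_def)

lemma (in prob_space) nn_integral_cmod_powr_CN:
  assumes "CN_distributed M X 1" and q: "q > 0"
  shows "(\<integral>\<^sup>+\<omega>. ennreal ((cmod (X \<omega>)) powr q) \<partial>M) = ennreal (Gamma (q / 2 + 1))"
proof -
  have [measurable]: "X \<in> borel_measurable M"
    using assms(1) by (rule CN_distributed_measurable)
  have "(\<integral>\<^sup>+\<omega>. ennreal ((cmod (X \<omega>)) powr q) \<partial>M) = (\<integral>\<^sup>+w. ennreal ((cmod w) powr q) \<partial>distr M borel X)"
    by (subst nn_integral_distr) auto
  then show ?thesis
    using q by (simp add: CN_distributed_distr[OF assms(1)] nn_integral_cnormal_cmod_powr)
qed

lemma cnormal_density_mult_complete_square:
  fixes c w y :: complex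
  assumes s: "s > 0"
  defines "T \<equiv> s + (cmod c)\<^sup>2"
  defines "m \<equiv> w * cnj c / of_real T"
  shows "cnormal_density 1 y * cnormal_density s (w - c * y)
       = cnormal_density T w * (T / (pi * s)) * exp (- (T / s) * (cmod (y - m))\<^sup>2)"
proof -
  have T: "T > 0" unfolding T_def using s by (simp add: add_pos_nonneg)
  have "of_real T * (y - m) = of_real T * y - w * cnj c"
    using T by (simp add: m_def field_simps)
  then have norm_ym: "cmod (of_real T * y - w * cnj c) = T * cmod (y - m)"
    using T by (simp add: norm_mult del: of_real_diff flip: \<open>of_real T * (y - m) = _\<close>)
  have square: "s * T * (cmod y)\<^sup>2 + T * (cmod (w - c * y))\<^sup>2
      = s * (cmod w)\<^sup>2 + (cmod (of_real T * y - w * cnj c))\<^sup>2"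
    unfolding T_def cmod_power2 by (simp add: algebra_simps power2_eq_square)
  have exponent: "- (cmod y)\<^sup>2 - (cmod (w - c * y))\<^sup>2 / s = - (cmod w)\<^sup>2 / T - (T / s) * (cmod (y - m))\<^sup>2"
  proof -
    have "- (cmod y)\<^sup>2 - (cmod (w - c * y))\<^sup>2 / s
        = - (s * T * (cmod y)\<^sup>2 + T * (cmod (w - c * y))\<^sup>2) / (s * T)"
      using s T by (simp add: field_simps)
    also have "\<dots> = - (cmod w)\<^sup>2 / T - (T / s) * (cmod (y - m))\<^sup>2"
      using s T unfolding square norm_ym by (simp add: power_mult_distrib field_simps power2_eq_square)
    finally show ?thesis .
  qed
  have "cnormal_density 1 y * cnormal_density s (w - c * y)
      = exp (- (cmod y)\<^sup>2 - (cmod (w - c * y))\<^sup>2 / s) / (pi * (pi * s))"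
    by (simp add: cnormal_density_def exp_diff exp_minus field_simps)
  also have "\<dots> = exp (- (cmod w)\<^sup>2 / T) * exp (- (T / s) * (cmod (y - m))\<^sup>2) / (pi * (pi * s))"
    by (simp add: exponent mult_exp_exp)
  also have "\<dots> = cnormal_density T w * (T / (pi * s)) * exp (- (T / s) * (cmod (y - m))\<^sup>2)"
    using s T by (simp add: cnormal_density_def)
  finally show ?thesis .
qed

lemma nn_integral_cnormal_density_convolution:
  assumes s: "s > 0"
  shows "(\<integral>\<^sup>+y. ennreal (cnormal_density 1 y * cnormal_density s (w - c * y)) \<partial>lborel)
       = ennreal (cnormal_density (s + (cmod c)\<^sup>2) w)"
proof -
  define T where "T = s + (cmod c)\<^sup>2"
  define m where "m = w * cnj c / of_real T"
  have T: "T > 0" unfolding T_def using s by (simp add: add_pos_nonneg)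
  have "(\<integral>\<^sup>+y. ennreal (cnormal_density 1 y * cnormal_density s (w - c * y)) \<partial>lborel)
      = (\<integral>\<^sup>+y. ennreal (cnormal_density T w * (T / (pi * s)))
          * ennreal (exp (- (T / s) * (cmod (y - m))\<^sup>2)) \<partial>lborel)"
    using s T unfolding T_def m_def
    by (intro nn_integral_cong)
      (simp add: cnormal_density_mult_complete_square ennreal_mult[symmetric] cnormal_density_nonneg)
  also have "\<dots> = ennreal (cnormal_density T w * (T / (pi * s))) * ennreal (pi / (T / s))"
    using s T nn_integral_lborel_exp_cmod_power2[of "T / s" m] by (subst nn_integral_cmult) auto
  also have "\<dots> = ennreal (cnormal_density T w)"
    using s T by (subst ennreal_mult[symmetric]) (auto simp: cnormal_density_nonneg)
  finally show ?thesis unfolding T_def .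
qed

lemma nn_integral_cnormal_add_mult:
  fixes f :: "complex \<Rightarrow> ennreal" and c :: complex
  assumes s: "s > 0" and [measurable]: "f \<in> borel_measurable borel"
  shows "(\<integral>\<^sup>+y. (\<integral>\<^sup>+u. f (u + c * y) \<partial>cnormal s) \<partial>cnormal 1) = (\<integral>\<^sup>+w. f w \<partial>cnormal (s + (cmod c)\<^sup>2))"
proof -
  have inner: "(\<integral>\<^sup>+u. f (u + c * y) \<partial>cnormal s)
      = (\<integral>\<^sup>+w. ennreal (cnormal_density s (w - c * y)) * f w \<partial>lborel)" for y
    using nn_integral_lborel_translate[of "\<lambda>w. ennreal (cnormal_density s (w - c * y)) * f w" "c * y"]
    by (simp add: nn_integral_cnormal)
  have "(\<integral>\<^sup>+y. (\<integral>\<^sup>+u. f (u + c * y) \<partial>cnormal s) \<partial>cnormal 1)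
      = (\<integral>\<^sup>+y. (\<integral>\<^sup>+w. ennreal (cnormal_density 1 y)
          * (ennreal (cnormal_density s (w - c * y)) * f w) \<partial>lborel) \<partial>lborel)"
    unfolding inner by (subst nn_integral_cnormal) (measurable, simp add: nn_integral_cmult)
  also have "\<dots> = (\<integral>\<^sup>+w. (\<integral>\<^sup>+y. ennreal (cnormal_density 1 y)
      * (ennreal (cnormal_density s (w - c * y)) * f w) \<partial>lborel) \<partial>lborel)"
    by (rule lborel_pair.Fubini') measurable
  also have "\<dots> = (\<integral>\<^sup>+w. (\<integral>\<^sup>+y. ennreal (cnormal_density 1 y * cnormal_density s (w - c * y)) \<partial>lborel)
      * f w \<partial>lborel)"
    using s by (subst nn_integral_multc[symmetric])
      (auto intro!: nn_integral_cong simp: ennreal_mult[symmetric] cnormal_density_nonneg mult_ac)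
  also have "\<dots> = (\<integral>\<^sup>+w. f w \<partial>cnormal (s + (cmod c)\<^sup>2))"
    by (simp add: nn_integral_cnormal_density_convolution[OF s] nn_integral_cnormal)
  finally show ?thesis .
qed

lemma nn_integral_PiM_cnormal_linear_comb:
  fixes f :: "complex \<Rightarrow> ennreal" and e :: "'i \<Rightarrow> complex" and J :: "'i set"
  assumes "finite J" and [measurable]: "f \<in> borel_measurable borel" and "s > 0"
  shows "(\<integral>\<^sup>+x. (\<integral>\<^sup>+u. f (u + (\<Sum>j\<in>J. e j * x j)) \<partial>cnormal s) \<partial>PiM J (\<lambda>_. cnormal 1))
       = (\<integral>\<^sup>+w. f w \<partial>cnormal (s + (\<Sum>j\<in>J. (cmod (e j))\<^sup>2)))"
  using assms(1,3)
proof (induction J arbitrary: s rule: finite_induct)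
  case empty
  then show ?case by (simp add: PiM_empty nn_integral_count_space_finite)
next
  case (insert j J)
  have s: "s > 0" by fact
  define lin where "lin x = (\<Sum>i\<in>J. e i * x i)" for x :: "'i \<Rightarrow> complex"
  have lin_upd: "(\<Sum>i\<in>insert j J. e i * (x(j := y)) i) = e j * y + lin x" for x y
    using insert unfolding lin_def by (auto intro!: sum.cong)
  interpret cnormal_s: prob_space "cnormal s"
    using s by (rule prob_space_cnormal)
  have "(\<integral>\<^sup>+x. (\<integral>\<^sup>+u. f (u + (\<Sum>i\<in>insert j J. e i * x i)) \<partial>cnormal s) \<partial>PiM (insert j J) (\<lambda>_. cnormal 1))
      = (\<integral>\<^sup>+x. (\<integral>\<^sup>+y. (\<integral>\<^sup>+u. f (u + (\<Sum>i\<in>insert j J. e i * (x(j := y)) i)) \<partial>cnormal s) \<partial>cnormal 1)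
          \<partial>PiM J (\<lambda>_. cnormal 1))"
    using insert by (subst cnormal_1_product.product_nn_integral_insert) (auto, measurable)
  also have "\<dots> = (\<integral>\<^sup>+x. (\<integral>\<^sup>+y. (\<integral>\<^sup>+u. (\<lambda>v. f (v + lin x)) (u + e j * y) \<partial>cnormal s) \<partial>cnormal 1)
      \<partial>PiM J (\<lambda>_. cnormal 1))"
    unfolding lin_upd by (simp add: add.assoc)
  also have "\<dots> = (\<integral>\<^sup>+x. (\<integral>\<^sup>+w. f (w + lin x) \<partial>cnormal (s + (cmod (e j))\<^sup>2)) \<partial>PiM J (\<lambda>_. cnormal 1))"
    by (intro nn_integral_cong nn_integral_cnormal_add_mult s) measurable
  also have "\<dots> = (\<integral>\<^sup>+w. f w \<partial>cnormal (s + (cmod (e j))\<^sup>2 + (\<Sum>i\<in>J. (cmod (e i))\<^sup>2)))"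
    unfolding lin_def using s by (intro insert.IH) (simp add: add_pos_nonneg)
  finally show ?case
    using insert by (simp add: add_ac)
qed

lemma nn_integral_PiM_cmod_linear_comb_powr:
  fixes e :: "'i \<Rightarrow> complex" and J :: "'i set"
  assumes J: "finite J" and q: "q > 0"
  shows "(\<integral>\<^sup>+x. ennreal ((cmod (\<Sum>j\<in>J. e j * x j)) powr q) \<partial>PiM J (\<lambda>_. cnormal 1))
       = ennreal ((\<Sum>j\<in>J. (cmod (e j))\<^sup>2) powr (q / 2) * Gamma (q / 2 + 1))"
proof (cases "\<forall>j\<in>J. e j = 0")
  case True
  then show ?thesis by simp
next
  case False
  then obtain j0 where j0: "j0 \<in> J" "e j0 \<noteq> 0" by auto
  define J' where "J' = J - {j0}"
  have J': "J = insert j0 J'" "j0 \<notin> J'" "finite J'" using j0 J by (auto simp: J'_def)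
  define a where "a = e j0"
  define e' where "e' = (\<lambda>j. e j / a)"
  define v where "v = 1 + (\<Sum>j\<in>J'. (cmod (e' j))\<^sup>2)"
  have a: "a \<noteq> 0" using j0 by (simp add: a_def)
  have v: "v > 0" by (simp add: v_def add_pos_nonneg sum_nonneg)
  \<comment> \<open>The coordinate j0 plays the role of the Gaussian noise in the previous lemma.\<close>
  have pull_out: "ennreal ((cmod (\<Sum>j\<in>J. e j * (x(j0 := y)) j)) powr q)
      = (\<lambda>w. ennreal ((cmod a) powr q * (cmod w) powr q)) (y + (\<Sum>j\<in>J'. e' j * x j))" for x y
  proof -
    have "(\<Sum>j\<in>J. e j * (x(j0 := y)) j) = a * y + (\<Sum>j\<in>J'. e j * x j)"
      using J' by (simp add: a_def, intro sum.cong) auto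
    also have "\<dots> = a * (y + (\<Sum>j\<in>J'. e' j * x j))"
      using a by (simp add: e'_def sum_distrib_left distrib_left)
    finally show ?thesis by (simp add: norm_mult powr_mult)
  qed
  have "(\<Sum>j\<in>J. (cmod (e j))\<^sup>2) = (cmod a)\<^sup>2 * v"
    using a J' by (simp add: a_def e'_def v_def sum_distrib_left norm_divide power_divide field_simps)
  then have variance: "(cmod a) powr q * v powr (q / 2) = (\<Sum>j\<in>J. (cmod (e j))\<^sup>2) powr (q / 2)"
    using v by (simp add: powr_mult power2_powr_half)
  have "(\<integral>\<^sup>+x. ennreal ((cmod (\<Sum>j\<in>J. e j * x j)) powr q) \<partial>PiM J (\<lambda>_. cnormal 1))
      = (\<integral>\<^sup>+x. (\<integral>\<^sup>+y. (\<lambda>w. ennreal ((cmod a) powr q * (cmod w) powr q)) (y + (\<Sum>j\<in>J'. e' j * x j))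
          \<partial>cnormal 1) \<partial>PiM J' (\<lambda>_. cnormal 1))"
  proof -
    have "(\<integral>\<^sup>+x. ennreal ((cmod (\<Sum>j\<in>J. e j * x j)) powr q) \<partial>PiM J (\<lambda>_. cnormal 1))
        = (\<integral>\<^sup>+x. (\<integral>\<^sup>+y. ennreal ((cmod (\<Sum>j\<in>J. e j * (x(j0 := y)) j)) powr q) \<partial>cnormal 1)
            \<partial>PiM J' (\<lambda>_. cnormal 1))"
      unfolding J'(1) using J' by (subst cnormal_1_product.product_nn_integral_insert) (auto, measurable)
    then show ?thesis
      unfolding pull_out .
  qed
  also have "\<dots> = (\<integral>\<^sup>+w. ennreal ((cmod a) powr q) * ennreal ((cmod w) powr q) \<partial>cnormal v)"
    unfolding v_def by (subst nn_integral_PiM_cnormal_linear_comb[OF J'(3)]) (auto simp: ennreal_mult)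
  also have "\<dots> = ennreal ((cmod a) powr q) * ennreal (v powr (q / 2) * Gamma (q / 2 + 1))"
    using v q by (simp add: nn_integral_cmult nn_integral_cnormal_cmod_powr)
  also have "\<dots> = ennreal ((\<Sum>j\<in>J. (cmod (e j))\<^sup>2) powr (q / 2) * Gamma (q / 2 + 1))"
    using q by (subst ennreal_mult[symmetric])
      (auto simp: Gamma_real_pos less_imp_le mult.assoc[symmetric] variance)
  finally show ?thesis .
qed

section \<open>Sums of squared moduli and inner products of Gaussian vectors\<close>

lemma nn_integral_cnormal_cmod_power2:
  assumes [measurable]: "\<phi> \<in> borel_measurable borel"
  shows "(\<integral>\<^sup>+y. \<phi> ((cmod y)\<^sup>2) \<partial>cnormal 1) = (\<integral>\<^sup>+r. ennreal (erlang_density 0 1 r) * \<phi> r \<partial>lborel)"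
proof -
  have "(\<integral>\<^sup>+y. \<phi> ((cmod y)\<^sup>2) \<partial>cnormal 1)
      = (\<integral>\<^sup>+y. (\<lambda>r. ennreal (exp (- r) / pi) * \<phi> r) ((cmod y)\<^sup>2) \<partial>lborel)"
    by (simp add: nn_integral_cnormal cnormal_density_def)
  also have "\<dots> = (\<integral>\<^sup>+r. ennreal (erlang_density 0 1 r) * \<phi> r \<partial>lborel)"
    by (subst nn_integral_lborel_cmod_power2)
      (auto intro!: nn_integral_cong simp: indicator_def erlang_density_def ennreal_mult[symmetric]
        mult.assoc[symmetric])
  finally show ?thesis .
qed

lemma nn_integral_PiM_sum_cmod_power2:
  fixes J :: "'i set"
  assumes "finite J" "J \<noteq> {}" and "\<phi> \<in> borel_measurable borel"
  shows "(\<integral>\<^sup>+x. \<phi> (\<Sum>j\<in>J. (cmod (x j))\<^sup>2) \<partial>PiM J (\<lambda>_. cnormal 1))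
       = (\<integral>\<^sup>+r. ennreal (erlang_density (card J - 1) 1 r) * \<phi> r \<partial>lborel)"
  using assms
proof (induction J arbitrary: \<phi> rule: finite_ne_induct)
  case (singleton j)
  note [measurable] = singleton
  have "(\<integral>\<^sup>+x. \<phi> (\<Sum>j\<in>{j}. (cmod (x j))\<^sup>2) \<partial>PiM {j} (\<lambda>_. cnormal 1))
      = (\<integral>\<^sup>+x. (\<lambda>y. \<phi> ((cmod y)\<^sup>2)) (x j) \<partial>PiM {j} (\<lambda>_. cnormal 1))"
    by simp
  also have "\<dots> = (\<integral>\<^sup>+y. \<phi> ((cmod y)\<^sup>2) \<partial>cnormal 1)"
    by (rule cnormal_1_product.product_nn_integral_singleton) measurable
  also have "\<dots> = (\<integral>\<^sup>+r. ennreal (erlang_density 0 1 r) * \<phi> r \<partial>lborel)"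
    by (rule nn_integral_cnormal_cmod_power2) measurable
  finally show ?case by simp
next
  case (insert j J)
  note [measurable] = insert.prems
  \<comment> \<open>Integrate out the new coordinate; what remains is an Erlang convolution.\<close>
  define \<psi> where "\<psi> = (\<lambda>t. \<integral>\<^sup>+y. \<phi> ((cmod y)\<^sup>2 + t) \<partial>cnormal 1)"
  have [measurable]: "\<psi> \<in> borel_measurable borel"
    unfolding \<psi>_def by measurable
  have \<psi>_erlang: "\<psi> t = (\<integral>\<^sup>+u. ennreal (erlang_density 0 1 (u - t)) * \<phi> u \<partial>lborel)" for t
  proof -
    have "\<psi> t = (\<integral>\<^sup>+u. (\<lambda>u. ennreal (erlang_density 0 1 (u - t)) * \<phi> u) (u + t) \<partial>lborel)"
      unfolding \<psi>_def by (subst nn_integral_cnormal_cmod_power2) simp_all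
    also have "\<dots> = (\<integral>\<^sup>+u. ennreal (erlang_density 0 1 (u - t)) * \<phi> u \<partial>lborel)"
      by (rule nn_integral_lborel_translate) measurable
    finally show ?thesis .
  qed
  have "(\<integral>\<^sup>+x. \<phi> (\<Sum>i\<in>insert j J. (cmod (x i))\<^sup>2) \<partial>PiM (insert j J) (\<lambda>_. cnormal 1))
      = (\<integral>\<^sup>+x. (\<integral>\<^sup>+y. \<phi> (\<Sum>i\<in>insert j J. (cmod ((x(j := y)) i))\<^sup>2) \<partial>cnormal 1) \<partial>PiM J (\<lambda>_. cnormal 1))"
    using insert by (subst cnormal_1_product.product_nn_integral_insert) (auto, measurable)
  also have "\<dots> = (\<integral>\<^sup>+x. \<psi> (\<Sum>i\<in>J. (cmod (x i))\<^sup>2) \<partial>PiM J (\<lambda>_. cnormal 1))"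
  proof (rule nn_integral_cong)
    fix x
    have "(\<Sum>i\<in>J. (cmod ((x(j := y)) i))\<^sup>2) = (\<Sum>i\<in>J. (cmod (x i))\<^sup>2)" for y
      using insert by (intro sum.cong) auto
    then show "(\<integral>\<^sup>+y. \<phi> (\<Sum>i\<in>insert j J. (cmod ((x(j := y)) i))\<^sup>2) \<partial>cnormal 1) = \<psi> (\<Sum>i\<in>J. (cmod (x i))\<^sup>2)"
      using insert unfolding \<psi>_def by simp
  qed
  also have "\<dots> = (\<integral>\<^sup>+r. ennreal (erlang_density (card J - 1) 1 r) * \<psi> r \<partial>lborel)"
    by (rule insert.IH) measurable
  also have "\<dots> = (\<integral>\<^sup>+r. (\<integral>\<^sup>+u. ennreal (erlang_density (card J - 1) 1 r)
        * (ennreal (erlang_density 0 1 (u - r)) * \<phi> u) \<partial>lborel) \<partial>lborel)"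
    by (simp add: \<psi>_erlang nn_integral_cmult)
  also have "\<dots> = (\<integral>\<^sup>+u. (\<integral>\<^sup>+r. ennreal (erlang_density (card J - 1) 1 r)
        * (ennreal (erlang_density 0 1 (u - r)) * \<phi> u) \<partial>lborel) \<partial>lborel)"
    by (rule lborel_pair.Fubini') measurable
  also have "\<dots> = (\<integral>\<^sup>+u. (\<integral>\<^sup>+r. ennreal (erlang_density 0 1 (u - r))
        * ennreal (erlang_density (card J - 1) 1 r) \<partial>lborel) * \<phi> u \<partial>lborel)"
    by (intro nn_integral_cong, subst nn_integral_multc[symmetric]) (auto intro!: nn_integral_cong simp: mult_ac)
  also have "\<dots> = (\<integral>\<^sup>+u. ennreal (erlang_density (card (insert j J) - 1) 1 u) * \<phi> u \<partial>lborel)"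
  proof -
    have "Suc 0 + Suc (card J - 1) - 1 = card (insert j J) - 1"
      using insert by (simp add: Suc_leI card_gt_0_iff)
    then show ?thesis
      using fun_cong[OF convolution_erlang_density[of 1 0 "card J - 1"]] by (simp add: mult.commute)
  qed
  finally show ?case .
qed

lemma nn_integral_erlang_density_powr:
  assumes p: "p > 0"
  shows "(\<integral>\<^sup>+r. ennreal (erlang_density k 1 r) * ennreal (r powr p) \<partial>lborel)
       = ennreal (Gamma (p + real k + 1) / fact k)"
proof -
  have "(\<integral>\<^sup>+r. ennreal (erlang_density k 1 r) * ennreal (r powr p) \<partial>lborel)
      = (\<integral>\<^sup>+r. ennreal (1 / fact k) * ennreal (indicator {0..} r * (r powr (p + real k) * exp (- r / 1))) \<partial>lborel)"
  proof (intro nn_integral_cong)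
    fix r :: real
    show "ennreal (erlang_density k 1 r) * ennreal (r powr p)
        = ennreal (1 / fact k) * ennreal (indicator {0..} r * (r powr (p + real k) * exp (- r / 1)))"
    proof (cases "r > 0")
      case True
      then show ?thesis
        by (simp add: erlang_density_def ennreal_mult[symmetric] powr_add indicator_def powr_realpow field_simps)
    next
      case False
      then show ?thesis using p by (cases "r = 0") (auto simp: erlang_density_def indicator_def)
    qed
  qed
  also have "\<dots> = ennreal (1 / fact k) * ennreal (Gamma (p + real k + 1))"
    using p nn_integral_powr_exp_Gamma[of "p + real k" 1] by (subst nn_integral_cmult) auto
  also have "\<dots> = ennreal (Gamma (p + real k + 1) / fact k)"
    using p by (subst ennreal_mult[symmetric]) (auto intro: Gamma_real_pos less_imp_le)
  finally show ?thesis .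
qed

lemma nn_integral_PiM_cmod_sum_mult_powr:
  fixes hs gs :: "nat \<Rightarrow> 'i"
  assumes inj: "inj_on hs {..<B}" "inj_on gs {..<B}" and B: "B \<ge> 1" and q: "q > 0"
  shows "(\<integral>\<^sup>+g. (\<integral>\<^sup>+h. ennreal ((cmod (\<Sum>b<B. h (hs b) * g (gs b))) powr q)
            \<partial>PiM (hs ` {..<B}) (\<lambda>_. cnormal 1)) \<partial>PiM (gs ` {..<B}) (\<lambda>_. cnormal 1))
       = ennreal (Gamma (q / 2 + 1) * Gamma (q / 2 + real B) / Gamma (real B))"
proof -
  \<comment> \<open>For fixed g the sum is a linear combination of the Gaussians h, hence Gaussian with
    variance the sum of the squared moduli of g; that sum is Erlang distributed.\<close>
  have inner: "(\<integral>\<^sup>+h. ennreal ((cmod (\<Sum>b<B. h (hs b) * g (gs b))) powr q) \<partial>PiM (hs ` {..<B}) (\<lambda>_. cnormal 1))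
      = ennreal ((\<Sum>j\<in>gs ` {..<B}. (cmod (g j))\<^sup>2) powr (q / 2) * Gamma (q / 2 + 1))" for g :: "'i \<Rightarrow> complex"
  proof -
    define e where "e = (\<lambda>k. g (gs (inv_into {..<B} hs k)))"
    have e_hs: "b < B \<Longrightarrow> e (hs b) = g (gs b)" for b
      using inj by (simp add: e_def inv_into_f_f)
    have "(\<Sum>b<B. h (hs b) * g (gs b)) = (\<Sum>j\<in>hs ` {..<B}. e j * h j)" for h :: "'i \<Rightarrow> complex"
      using inj by (subst sum.reindex) (auto simp: e_hs mult.commute)
    moreover have "(\<Sum>j\<in>hs ` {..<B}. (cmod (e j))\<^sup>2) = (\<Sum>j\<in>gs ` {..<B}. (cmod (g j))\<^sup>2)"
      using inj by (simp add: sum.reindex e_hs)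
    ultimately show ?thesis
      using q by (simp add: nn_integral_PiM_cmod_linear_comb_powr)
  qed
  have card: "card (gs ` {..<B}) = B"
    using inj by (simp add: card_image)
  have Gamma_pos: "Gamma (q / 2 + 1) > 0"
    using q by (intro Gamma_real_pos) simp
  have "(\<integral>\<^sup>+g. ennreal ((\<Sum>j\<in>gs ` {..<B}. (cmod (g j))\<^sup>2) powr (q / 2) * Gamma (q / 2 + 1))
        \<partial>PiM (gs ` {..<B}) (\<lambda>_. cnormal 1))
      = (\<integral>\<^sup>+r. ennreal (erlang_density (B - 1) 1 r) * ennreal (r powr (q / 2) * Gamma (q / 2 + 1)) \<partial>lborel)"
    using B by (subst nn_integral_PiM_sum_cmod_power2) (auto simp: card lessThan_empty_iff)
  also have "\<dots> = ennreal (Gamma (q / 2 + 1))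
      * (\<integral>\<^sup>+r. ennreal (erlang_density (B - 1) 1 r) * ennreal (r powr (q / 2)) \<partial>lborel)"
    using Gamma_pos by (subst nn_integral_cmult[symmetric])
      (auto intro!: nn_integral_cong simp: ennreal_mult[symmetric] mult_ac)
  also have "\<dots> = ennreal (Gamma (q / 2 + 1)) * ennreal (Gamma (q / 2 + real B) / Gamma (real B))"
  proof -
    have "Gamma (real B) = fact (B - 1)"
      using B Gamma_fact[of "B - 1"] by (simp add: of_nat_diff)
    then show ?thesis
      using B q by (simp add: nn_integral_erlang_density_powr of_nat_diff)
  qed
  also have "\<dots> = ennreal (Gamma (q / 2 + 1) * Gamma (q / 2 + real B) / Gamma (real B))"
    using B q Gamma_pos by (subst ennreal_mult[symmetric]) (auto intro!: divide_nonneg_pos Gamma_real_pos)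
  finally show ?thesis
    by (simp add: inner)
qed

lemma (in prob_space) distr_restrict_indep_vars:
  assumes ind: "indep_vars (\<lambda>_. borel) Z I" and J: "J \<subseteq> I" "J \<noteq> {}"
    and law: "\<And>j. j \<in> J \<Longrightarrow> distr M borel (Z j) = \<mu>"
  shows "distr M (PiM J (\<lambda>_. borel)) (\<lambda>\<omega>. \<lambda>j\<in>J. Z j \<omega>) = PiM J (\<lambda>_. \<mu>)"
proof -
  have "indep_vars (\<lambda>_. borel) Z J"
    using ind J(1) by (rule indep_vars_subset)
  then have "distr M (PiM J (\<lambda>_. borel)) (\<lambda>\<omega>. \<lambda>j\<in>J. Z j \<omega>) = PiM J (\<lambda>j. distr M borel (Z j))"
    using J ind by (subst indep_vars_iff_distr_eq_PiM'[symmetric]) (auto simp: indep_vars_def)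
  also have "\<dots> = PiM J (\<lambda>_. \<mu>)"
    by (rule PiM_cong) (simp_all add: law)
  finally show ?thesis .
qed

lemma (in prob_space) nn_integral_cmod_sum_mult_powr:
  fixes Z :: "'i \<Rightarrow> 'a \<Rightarrow> complex" and hs gs :: "nat \<Rightarrow> 'i"
  assumes ind: "indep_vars (\<lambda>_. borel) Z I"
    and inj: "inj_on hs {..<B}" "inj_on gs {..<B}"
    and sub: "hs ` {..<B} \<subseteq> I" "gs ` {..<B} \<subseteq> I"
    and disj: "hs ` {..<B} \<inter> gs ` {..<B} = {}"
    and law_hs: "\<And>b. b < B \<Longrightarrow> distr M borel (Z (hs b)) = cnormal 1"
    and law_gs: "\<And>b. b < B \<Longrightarrow> distr M borel (Z (gs b)) = cnormal 1"
    and B: "B \<ge> 1" and q: "q > 0"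
  shows "(\<integral>\<^sup>+\<omega>. ennreal ((cmod (\<Sum>b<B. Z (hs b) \<omega> * Z (gs b) \<omega>)) powr q) \<partial>M)
       = ennreal (Gamma (q / 2 + 1) * Gamma (q / 2 + real B) / Gamma (real B))"
proof -
  define HJ where "HJ = hs ` {..<B}"
  define GJ where "GJ = gs ` {..<B}"
  define Xh where "Xh = (\<lambda>\<omega>. \<lambda>j\<in>HJ. Z j \<omega>)"
  define Xg where "Xg = (\<lambda>\<omega>. \<lambda>j\<in>GJ. Z j \<omega>)"
  define F where "F = (\<lambda>(h, g). ennreal ((cmod (\<Sum>b<B. h (hs b) * g (gs b))) powr q))"
  have nonempty: "HJ \<noteq> {}" "GJ \<noteq> {}"
    using B by (auto simp: HJ_def GJ_def lessThan_empty_iff)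
  have indep: "indep_var (PiM HJ (\<lambda>_. borel)) Xh (PiM GJ (\<lambda>_. borel)) Xg"
    unfolding Xh_def Xg_def HJ_def GJ_def using disj sub by (intro indep_var_restrict[OF ind])
  have joint_law: "distr M (PiM HJ (\<lambda>_. borel) \<Otimes>\<^sub>M PiM GJ (\<lambda>_. borel)) (\<lambda>\<omega>. (Xh \<omega>, Xg \<omega>))
      = PiM HJ (\<lambda>_. cnormal 1) \<Otimes>\<^sub>M PiM GJ (\<lambda>_. cnormal 1)"
  proof -
    have "distr M (PiM HJ (\<lambda>_. borel)) Xh = PiM HJ (\<lambda>_. cnormal 1)"
      unfolding Xh_def using sub nonempty by (intro distr_restrict_indep_vars[OF ind]) (auto simp: HJ_def law_hs)
    moreover have "distr M (PiM GJ (\<lambda>_. borel)) Xg = PiM GJ (\<lambda>_. cnormal 1)"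
      unfolding Xg_def using sub nonempty by (intro distr_restrict_indep_vars[OF ind]) (auto simp: GJ_def law_gs)
    ultimately show ?thesis
      using indep unfolding indep_var_distribution_eq by simp
  qed
  have [measurable]: "b < B \<Longrightarrow> (\<lambda>h. h (hs b)) \<in> borel_measurable (PiM HJ (\<lambda>_. borel))"
    "b < B \<Longrightarrow> (\<lambda>g. g (gs b)) \<in> borel_measurable (PiM GJ (\<lambda>_. borel))" for b
    by (auto simp: HJ_def GJ_def intro!: measurable_component_singleton)
  have F_measurable: "F \<in> borel_measurable (PiM HJ (\<lambda>_. borel) \<Otimes>\<^sub>M PiM GJ (\<lambda>_. borel))"
    unfolding F_def by measurable
  interpret product: pair_prob_space "PiM HJ (\<lambda>_. cnormal 1)" "PiM GJ (\<lambda>_. cnormal 1)"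
    by (simp add: pair_prob_space_def pair_sigma_finite_def prob_space_imp_sigma_finite prob_space_PiM
        prob_space_cnormal)
  have "(\<integral>\<^sup>+\<omega>. ennreal ((cmod (\<Sum>b<B. Z (hs b) \<omega> * Z (gs b) \<omega>)) powr q) \<partial>M)
      = (\<integral>\<^sup>+\<omega>. F (Xh \<omega>, Xg \<omega>) \<partial>M)"
    by (intro nn_integral_cong) (simp add: F_def Xh_def Xg_def HJ_def GJ_def)
  also have "\<dots> = (\<integral>\<^sup>+x. F x \<partial>(PiM HJ (\<lambda>_. cnormal 1) \<Otimes>\<^sub>M PiM GJ (\<lambda>_. cnormal 1)))"
    using indep F_measurable unfolding joint_law[symmetric]
    by (subst nn_integral_distr) (auto dest: indep_var_rv1 indep_var_rv2 intro: measurable_Pair)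
  also have "\<dots> = (\<integral>\<^sup>+g. (\<integral>\<^sup>+h. F (h, g) \<partial>PiM HJ (\<lambda>_. cnormal 1)) \<partial>PiM GJ (\<lambda>_. cnormal 1))"
    using F_measurable by (subst product.nn_integral_snd[symmetric]) (simp_all cong: measurable_cong_sets)
  also have "\<dots> = ennreal (Gamma (q / 2 + 1) * Gamma (q / 2 + real B) / Gamma (real B))"
    unfolding F_def HJ_def GJ_def using inj B q by (simp add: nn_integral_PiM_cmod_sum_mult_powr)
  finally show ?thesis .
qed

section \<open>Second moments of independent sums and Jensen's inequality\<close>

lemma (in prob_space) nn_integral_square_sum_indep:
  fixes Y :: "'i \<Rightarrow> 'a \<Rightarrow> real" and c m s :: "'i \<Rightarrow> real"
  assumes T: "finite T" and ind: "indep_vars (\<lambda>_. borel) Y T"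
    and Y_nonneg: "\<And>t \<omega>. t \<in> T \<Longrightarrow> 0 \<le> Y t \<omega>" and c_nonneg: "\<And>t. t \<in> T \<Longrightarrow> 0 \<le> c t"
    and mean: "\<And>t. t \<in> T \<Longrightarrow> (\<integral>\<^sup>+\<omega>. ennreal (Y t \<omega>) \<partial>M) = ennreal (m t)"
    and second: "\<And>t. t \<in> T \<Longrightarrow> (\<integral>\<^sup>+\<omega>. ennreal ((Y t \<omega>)\<^sup>2) \<partial>M) = ennreal (s t)"
    and m_nonneg: "\<And>t. t \<in> T \<Longrightarrow> 0 \<le> m t" and s_nonneg: "\<And>t. t \<in> T \<Longrightarrow> 0 \<le> s t"
  shows "(\<integral>\<^sup>+\<omega>. ennreal ((\<Sum>t\<in>T. c t * Y t \<omega>)\<^sup>2) \<partial>M)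
       = ennreal ((\<Sum>t\<in>T. c t * m t)\<^sup>2 + (\<Sum>t\<in>T. (c t)\<^sup>2 * (s t - (m t)\<^sup>2)))"
proof -
  define E where "E t u = (if t = u then s t else m t * m u)" for t u
  have E_nonneg: "t \<in> T \<Longrightarrow> u \<in> T \<Longrightarrow> 0 \<le> E t u" for t u
    using m_nonneg s_nonneg by (simp add: E_def)
  have [measurable]: "t \<in> T \<Longrightarrow> Y t \<in> borel_measurable M" for t
    using ind by (auto simp: indep_vars_def)
  have moment: "(\<integral>\<^sup>+\<omega>. ennreal (Y t \<omega> * Y u \<omega>) \<partial>M) = ennreal (E t u)" if "t \<in> T" "u \<in> T" for t u
  proof (cases "t = u")
    case True
    then show ?thesis
      using second that by (simp add: E_def power2_eq_square)
  next
    case False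
    have "indep_vars (\<lambda>_. borel) (\<lambda>i \<omega>. ennreal (Y i \<omega>)) {t, u}"
      using that by (intro indep_vars_compose2[OF indep_vars_subset[OF ind]]) auto
    then have "(\<integral>\<^sup>+\<omega>. (\<Prod>i\<in>{t, u}. ennreal (Y i \<omega>)) \<partial>M) = (\<Prod>i\<in>{t, u}. \<integral>\<^sup>+\<omega>. ennreal (Y i \<omega>) \<partial>M)"
      by (intro indep_vars_nn_integral) auto
    then show ?thesis
      using False that Y_nonneg m_nonneg by (simp add: E_def mean ennreal_mult)
  qed
  have "(\<integral>\<^sup>+\<omega>. ennreal ((\<Sum>t\<in>T. c t * Y t \<omega>)\<^sup>2) \<partial>M)
      = (\<integral>\<^sup>+\<omega>. (\<Sum>t\<in>T. \<Sum>u\<in>T. ennreal (c t * c u) * ennreal (Y t \<omega> * Y u \<omega>)) \<partial>M)"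
    using c_nonneg Y_nonneg
    by (intro nn_integral_cong)
      (simp add: power2_eq_square sum_product sum_ennreal ennreal_mult[symmetric] sum_nonneg mult_ac)
  also have "\<dots> = (\<Sum>t\<in>T. \<Sum>u\<in>T. ennreal (c t * c u) * (\<integral>\<^sup>+\<omega>. ennreal (Y t \<omega> * Y u \<omega>) \<partial>M))"
    by (simp add: nn_integral_sum nn_integral_cmult)
  also have "\<dots> = (\<Sum>t\<in>T. \<Sum>u\<in>T. ennreal (c t * c u * E t u))"
    using c_nonneg E_nonneg by (intro sum.cong refl) (simp add: moment ennreal_mult)
  also have "\<dots> = ennreal (\<Sum>t\<in>T. \<Sum>u\<in>T. c t * c u * E t u)"
    using c_nonneg E_nonneg by (simp add: sum_ennreal sum_nonneg)
  also have "(\<Sum>t\<in>T. \<Sum>u\<in>T. c t * c u * E t u) = (\<Sum>t\<in>T. c t * m t)\<^sup>2 + (\<Sum>t\<in>T. (c t)\<^sup>2 * (s t - (m t)\<^sup>2))"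
  proof -
    have "c t * c u * E t u = c t * m t * (c u * m u) + (if t = u then (c t)\<^sup>2 * (s t - (m t)\<^sup>2) else 0)" for t u
      by (simp add: E_def power2_eq_square algebra_simps)
    then show ?thesis
      using T by (simp add: sum.distrib power2_eq_square sum_product)
  qed
  finally show ?thesis .
qed

lemma log_one_plus_le_tangent:
  fixes Q \<gamma> w :: real
  assumes "0 \<le> Q" "0 < \<gamma>" "0 \<le> w"
  shows "log 2 (1 + \<gamma> * w) \<le> log 2 (1 + \<gamma> * Q) + \<gamma> * (w - Q) / ((1 + \<gamma> * Q) * ln 2)"
proof -
  have pos: "0 < 1 + \<gamma> * Q" "0 < 1 + \<gamma> * w"
    using assms by (simp_all add: add_pos_nonneg)
  have "ln (1 + \<gamma> * w) - ln (1 + \<gamma> * Q) = ln ((1 + \<gamma> * w) / (1 + \<gamma> * Q))"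
    using pos by (simp add: ln_div)
  also have "\<dots> \<le> (1 + \<gamma> * w) / (1 + \<gamma> * Q) - 1"
    using pos by (intro ln_le_minus_one) simp
  also have "\<dots> = \<gamma> * (w - Q) / (1 + \<gamma> * Q)"
    using pos by (simp add: field_simps)
  finally have "ln (1 + \<gamma> * w) / ln 2 \<le> (ln (1 + \<gamma> * Q) + \<gamma> * (w - Q) / (1 + \<gamma> * Q)) / ln 2"
    by (intro divide_right_mono) auto
  then show ?thesis
    by (simp add: log_def add_divide_distrib divide_divide_eq_left)
qed

lemma (in prob_space) nn_integral_log_one_plus_le:
  fixes g W :: "'a \<Rightarrow> real"
  assumes [measurable]: "W \<in> borel_measurable M"
    and mean: "(\<integral>\<^sup>+\<omega>. ennreal (W \<omega>) \<partial>M) = ennreal Q"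
    and Q: "0 \<le> Q" and \<gamma>: "0 < \<gamma>"
    and g_nonneg: "\<And>\<omega>. 0 \<le> g \<omega>" and g_le: "\<And>\<omega>. g \<omega> \<le> W \<omega>"
  shows "(\<integral>\<^sup>+\<omega>. ennreal (log 2 (1 + \<gamma> * g \<omega>)) \<partial>M) \<le> ennreal (log 2 (1 + \<gamma> * Q))"
proof -
  \<comment> \<open>Jensen's inequality for the concave map w \<mapsto> log(1 + \<gamma> w), through its tangent at the mean.\<close>
  define slope where "slope = \<gamma> / ((1 + \<gamma> * Q) * ln 2)"
  define offset where "offset = log 2 (1 + \<gamma> * Q) - slope * Q"
  have tangent: "log 2 (1 + \<gamma> * Q) + \<gamma> * (w - Q) / ((1 + \<gamma> * Q) * ln 2) = offset + slope * w" for w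
    by (simp add: offset_def slope_def diff_divide_distrib right_diff_distrib)
  have slope_nonneg: "0 \<le> slope"
    using Q \<gamma> by (simp add: slope_def add_nonneg_nonneg)
  have offset_nonneg: "0 \<le> offset"
    using log_one_plus_le_tangent[OF Q \<gamma> order_refl] unfolding tangent by simp
  have W_nonneg: "0 \<le> W \<omega>" for \<omega>
    using g_nonneg g_le order_trans by blast
  have pointwise: "ennreal (log 2 (1 + \<gamma> * g \<omega>)) \<le> ennreal offset + ennreal slope * ennreal (W \<omega>)" for \<omega>
  proof -
    have "log 2 (1 + \<gamma> * g \<omega>) \<le> log 2 (1 + \<gamma> * W \<omega>)"
      using \<gamma> g_nonneg g_le W_nonneg by (intro log_le_cancel_iff[THEN iffD2]) (auto intro: add_pos_nonneg)
    also have "\<dots> \<le> offset + slope * W \<omega>"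
      using log_one_plus_le_tangent[OF Q \<gamma> W_nonneg] by (simp only: tangent)
    finally have "ennreal (log 2 (1 + \<gamma> * g \<omega>)) \<le> ennreal (offset + slope * W \<omega>)"
      by (rule ennreal_leI)
    also have "\<dots> = ennreal offset + ennreal slope * ennreal (W \<omega>)"
      using slope_nonneg offset_nonneg W_nonneg by (simp add: ennreal_plus ennreal_mult)
    finally show ?thesis .
  qed
  have "(\<integral>\<^sup>+\<omega>. ennreal (log 2 (1 + \<gamma> * g \<omega>)) \<partial>M) \<le> (\<integral>\<^sup>+\<omega>. ennreal offset + ennreal slope * ennreal (W \<omega>) \<partial>M)"
    by (intro nn_integral_mono pointwise)
  also have "\<dots> = ennreal (offset + slope * Q)"
    using slope_nonneg offset_nonneg Q
    by (simp add: nn_integral_add nn_integral_cmult mean emeasure_space_1 ennreal_plus ennreal_mult)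
  also have "offset + slope * Q = log 2 (1 + \<gamma> * Q)"
    by (simp add: offset_def)
  finally show ?thesis .
qed

section \<open>The grouped RIS channel\<close>

lemma Gamma_three_halves: "Gamma (3 / 2 :: real) = sqrt pi / 2"
proof -
  have "Gamma (1 / 2 + 1 :: real) = 1 / 2 * Gamma (1 / 2)"
    by (rule Gamma_plus1) (auto dest: nonpos_Ints_nonpos)
  then show ?thesis
    by (simp add: Gamma_one_half_real)
qed

definition vgrp_mean :: "nat \<Rightarrow> real" where
  "vgrp_mean B = sqrt pi * Gamma (real B + 1 / 2) / (2 * Gamma (real B))"

lemma vgrp_mean_pos: "1 \<le> B \<Longrightarrow> 0 < vgrp_mean B"
  by (auto simp: vgrp_mean_def intro!: divide_pos_pos mult_pos_pos Gamma_real_pos)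

lemma vgrp_mean_power2_le:
  assumes B: "1 \<le> B"
  shows "(vgrp_mean B)\<^sup>2 \<le> real B"
proof -
  have midpoint: "(1 - 1 / 2) *\<^sub>R real B + (1 / 2) *\<^sub>R (real B + 1) = real B + 1 / 2"
    by (simp add: field_simps)
  have log_convex: "ln (Gamma (real B + 1 / 2)) \<le> 1 / 2 * ln (Gamma (real B)) + 1 / 2 * ln (Gamma (real B + 1))"
    using convex_onD[OF log_convex_Gamma_real, of "1 / 2" "real B" "real B + 1", unfolded midpoint] B
    by simp
  have pos: "0 < Gamma (real B + 1 / 2)" "0 < Gamma (real B)" "0 < Gamma (real B + 1)"
    using B by (auto intro!: Gamma_real_pos)
  with log_convex have "ln ((Gamma (real B + 1 / 2))\<^sup>2) \<le> ln (Gamma (real B) * Gamma (real B + 1))"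
    by (simp only: ln_realpow ln_mult_pos[OF pos(2,3)])
  then have "(Gamma (real B + 1 / 2))\<^sup>2 \<le> Gamma (real B) * Gamma (real B + 1)"
    by (rule ln_le_cancel_iff[OF zero_less_power[OF pos(1)] mult_pos_pos[OF pos(2,3)], THEN iffD1])
  also have "\<dots> = real B * (Gamma (real B))\<^sup>2"
    using B Gamma_plus1[of "real B"] by (simp add: power2_eq_square of_nat_in_nonpos_Ints_iff)
  finally have "(vgrp_mean B)\<^sup>2 \<le> pi / 4 * real B"
    using B by (simp add: vgrp_mean_def power_divide power_mult_distrib divide_le_eq Gamma_real_pos field_simps)
  also have "\<dots> \<le> real B"
    using pi_less_4 by (intro mult_left_le_one_le) auto
  finally show ?thesis .
qed

definition gain_bound_mean :: "nat \<Rightarrow> nat \<Rightarrow> real \<Rightarrow> real \<Rightarrow> real" where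
  "gain_bound_mean B n \<beta>d \<beta>l = \<beta>l * (vgrp_mean B)\<^sup>2 * (real n)\<^sup>2
     + (\<beta>l * (real B - (vgrp_mean B)\<^sup>2) + sqrt (pi * \<beta>d * \<beta>l) * vgrp_mean B) * real n + \<beta>d"

lemma gain_bound_mean_nonneg: "1 \<le> B \<Longrightarrow> 0 \<le> \<beta>d \<Longrightarrow> 0 \<le> \<beta>l \<Longrightarrow> 0 \<le> gain_bound_mean B n \<beta>d \<beta>l"
  using vgrp_mean_power2_le[of B] vgrp_mean_pos[of B] by (simp add: gain_bound_mean_def)

definition gain_component :: "(chan_idx \<Rightarrow> 'a \<Rightarrow> complex) \<Rightarrow> nat \<Rightarrow> nat option \<Rightarrow> 'a \<Rightarrow> real" where
  "gain_component Z B t \<omega> = (case t of None \<Rightarrow> cmod (Z Hd \<omega>) | Some i \<Rightarrow> cmod (vgrp Z B i \<omega>))"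

lemma eff_gain_le:
  assumes "0 \<le> \<beta>d" "0 \<le> \<beta>l"
  shows "eff_gain Z B K' P \<beta>d \<beta>l x \<omega>
       \<le> (sqrt \<beta>d * cmod (Z Hd \<omega>) + sqrt \<beta>l * (\<Sum>i<K'. cmod (vgrp Z B i \<omega>)))\<^sup>2"
proof -
  let ?S = "\<Sum>i<K'. phi_hat Z B K' P \<beta>d \<beta>l x i \<omega> * vgrp Z B i \<omega>"
  have "cmod ?S \<le> (\<Sum>i<K'. cmod (vgrp Z B i \<omega>))"
    by (rule order_trans[OF norm_sum]) (simp add: norm_mult phi_hat_def)
  then have "cmod (complex_of_real (sqrt \<beta>d) * Z Hd \<omega> + complex_of_real (sqrt \<beta>l) * ?S)
      \<le> sqrt \<beta>d * cmod (Z Hd \<omega>) + sqrt \<beta>l * (\<Sum>i<K'. cmod (vgrp Z B i \<omega>))"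
    using assms by (intro order_trans[OF norm_triangle_ineq]) (simp add: norm_mult mult_left_mono)
  then show ?thesis
    unfolding eff_gain_def by (rule power_mono) simp
qed

locale grouped_ris_channel = prob_space M
  for M :: "'a measure" and Z :: "chan_idx \<Rightarrow> 'a \<Rightarrow> complex" and K B :: nat +
  assumes B_pos: "1 \<le> B"
    and indep: "indep_vars (\<lambda>_. borel) Z ({H k | k. k < K} \<union> {G k | k. k < K} \<union> {Hd})"
    and law_H: "\<And>k. k < K \<Longrightarrow> CN_distributed M (Z (H k)) 1"
    and law_G: "\<And>k. k < K \<Longrightarrow> CN_distributed M (Z (G k)) 1"
    and law_Hd: "CN_distributed M (Z Hd) 1"
begin

lemma group_index_less:
  assumes "i < K div B" "b < B"
  shows "b + i * B < K"
proof -
  have "(Suc i) * B \<le> K div B * B"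
    using assms(1) by (intro mult_right_mono) simp_all
  also have "\<dots> \<le> K"
    by simp
  finally show ?thesis
    using assms(2) by simp
qed

lemma nn_integral_cmod_vgrp_powr:
  assumes "i < K div B" "0 < q"
  shows "(\<integral>\<^sup>+\<omega>. ennreal ((cmod (vgrp Z B i \<omega>)) powr q) \<partial>M)
       = ennreal (Gamma (q / 2 + 1) * Gamma (q / 2 + real B) / Gamma (real B))"
  unfolding vgrp_def using assms B_pos
  by (intro nn_integral_cmod_sum_mult_powr[OF indep])
    (auto simp: inj_on_def group_index_less CN_distributed_distr law_H law_G)

lemma nn_integral_cmod_vgrp:
  "i < K div B \<Longrightarrow> (\<integral>\<^sup>+\<omega>. ennreal (cmod (vgrp Z B i \<omega>)) \<partial>M) = ennreal (vgrp_mean B)"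
  using nn_integral_cmod_vgrp_powr[of i 1]
  by (simp add: vgrp_mean_def Gamma_three_halves add.commute)

lemma nn_integral_cmod_vgrp_power2:
  assumes "i < K div B"
  shows "(\<integral>\<^sup>+\<omega>. ennreal ((cmod (vgrp Z B i \<omega>))\<^sup>2) \<partial>M) = ennreal (real B)"
proof -
  have "0 < Gamma (real B)"
    using B_pos by (intro Gamma_real_pos) simp
  then have "Gamma (real B) \<noteq> 0"
    by linarith
  then show ?thesis
    using nn_integral_cmod_vgrp_powr[OF assms, of 2] B_pos Gamma_plus1[of "real B"]
    by (simp add: Gamma_numeral add.commute of_nat_in_nonpos_Ints_iff)
qed

lemma nn_integral_cmod_Hd: "(\<integral>\<^sup>+\<omega>. ennreal (cmod (Z Hd \<omega>)) \<partial>M) = ennreal (sqrt pi / 2)"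
  using nn_integral_cmod_powr_CN[OF law_Hd, of 1] by (simp add: Gamma_three_halves)

lemma nn_integral_cmod_Hd_power2: "(\<integral>\<^sup>+\<omega>. ennreal ((cmod (Z Hd \<omega>))\<^sup>2) \<partial>M) = 1"
  using nn_integral_cmod_powr_CN[OF law_Hd, of 2] by (simp add: Gamma_numeral)

lemma borel_measurable_gain_bound:
  "(\<lambda>\<omega>. (sqrt \<beta>d * cmod (Z Hd \<omega>) + sqrt \<beta>l * (\<Sum>i<K div B. cmod (vgrp Z B i \<omega>)))\<^sup>2)
     \<in> borel_measurable M"
proof -
  have [measurable]: "Z Hd \<in> borel_measurable M"
    using law_Hd by (rule CN_distributed_measurable)
  have "vgrp Z B i \<in> borel_measurable M" if "i \<in> {..<K div B}" for i
  proof -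
    have [measurable]: "b < B \<Longrightarrow> Z (H (b + i * B)) \<in> borel_measurable M"
      "b < B \<Longrightarrow> Z (G (b + i * B)) \<in> borel_measurable M" for b
      using that group_index_less by (auto intro: CN_distributed_measurable law_H law_G)
    show ?thesis
      unfolding vgrp_def by measurable
  qed
  then show ?thesis
    by (intro borel_measurable_power borel_measurable_add borel_measurable_times borel_measurable_sum
        borel_measurable_norm) auto
qed

lemma indep_gain_components:
  "indep_vars (\<lambda>_. borel) (gain_component Z B) (insert None (Some ` {..<K div B}))"
proof -
  define T where "T = insert None (Some ` {..<K div B})"
  define blk where "blk = (\<lambda>t. case t of None \<Rightarrow> {Hd}
      | Some i \<Rightarrow> (\<lambda>b. H (b + i * B)) ` {..<B} \<union> (\<lambda>b. G (b + i * B)) ` {..<B})"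
  define f where "f t h = (case t of None \<Rightarrow> cmod (h Hd)
      | Some i \<Rightarrow> cmod (\<Sum>b<B. h (H (b + i * B)) * h (G (b + i * B))))" for t and h :: "chan_idx \<Rightarrow> complex"
  have blk_sub: "t \<in> T \<Longrightarrow> blk t \<subseteq> {H k | k. k < K} \<union> {G k | k. k < K} \<union> {Hd}" for t
    using group_index_less by (auto simp: T_def blk_def)
  have "i = j" if "b < B" "b' < B" "b + i * B = b' + j * B" for b b' i j :: nat
  proof -
    have "(b + i * B) div B = i" "(b' + j * B) div B = j"
      using that(1,2) by simp_all
    then show ?thesis
      using that(3) by simp
  qed
  then have blk_disjoint: "disjoint_family_on blk T"
    by (auto simp: disjoint_family_on_def T_def blk_def)
  have f_measurable: "f t \<in> borel_measurable (PiM (blk t) (\<lambda>_. borel))" for t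
  proof (cases t)
    case None
    have [measurable]: "(\<lambda>h. h Hd) \<in> borel_measurable (PiM (blk None) (\<lambda>_. borel))"
      by (rule measurable_component_singleton) (simp add: blk_def)
    show ?thesis unfolding f_def None by simp measurable
  next
    case (Some i)
    have [measurable]: "b < B \<Longrightarrow> (\<lambda>h. h (H (b + i * B))) \<in> borel_measurable (PiM (blk (Some i)) (\<lambda>_. borel))"
      "b < B \<Longrightarrow> (\<lambda>h. h (G (b + i * B))) \<in> borel_measurable (PiM (blk (Some i)) (\<lambda>_. borel))" for b
      by (auto simp: blk_def intro!: measurable_component_singleton)
    show ?thesis unfolding f_def Some by simp measurable
  qed
  have "indep_vars (\<lambda>_. borel) (\<lambda>t \<omega>. f t (\<lambda>j\<in>blk t. Z j \<omega>)) T"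
    by (rule indep_vars_compose2[OF indep_vars_restrict[OF indep blk_sub blk_disjoint] f_measurable])
  moreover have "(\<lambda>t \<omega>. f t (\<lambda>j\<in>blk t. Z j \<omega>)) = gain_component Z B"
    by (auto simp: fun_eq_iff f_def blk_def gain_component_def vgrp_def split: option.split
        intro!: arg_cong[where f=cmod] sum.cong)
  ultimately show ?thesis
    by (simp add: T_def)
qed

lemma nn_integral_gain_bound:
  assumes \<beta>d: "0 \<le> \<beta>d" and \<beta>l: "0 \<le> \<beta>l"
  shows "(\<integral>\<^sup>+\<omega>. ennreal ((sqrt \<beta>d * cmod (Z Hd \<omega>) + sqrt \<beta>l * (\<Sum>i<K div B. cmod (vgrp Z B i \<omega>)))\<^sup>2) \<partial>M)
       = ennreal (gain_bound_mean B (K div B) \<beta>d \<beta>l)"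
proof -
  define n where "n = K div B"
  define T where "T = insert None (Some ` {..<n})"
  define c where "c t = (case t of None \<Rightarrow> sqrt \<beta>d | Some _ \<Rightarrow> sqrt \<beta>l)" for t :: "nat option"
  define m where "m t = (case t of None \<Rightarrow> sqrt pi / 2 | Some _ \<Rightarrow> vgrp_mean B)" for t :: "nat option"
  define s where "s t = (case t of None \<Rightarrow> 1 | Some _ \<Rightarrow> real B)" for t :: "nat option"
  have sum_T: "(\<Sum>t\<in>T. g t) = g None + (\<Sum>i<n. g (Some i))" for g :: "nat option \<Rightarrow> real"
    by (simp add: T_def sum.reindex)
  have "(\<integral>\<^sup>+\<omega>. ennreal ((\<Sum>t\<in>T. c t * gain_component Z B t \<omega>)\<^sup>2) \<partial>M)
      = ennreal ((\<Sum>t\<in>T. c t * m t)\<^sup>2 + (\<Sum>t\<in>T. (c t)\<^sup>2 * (s t - (m t)\<^sup>2)))"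
  proof (rule nn_integral_square_sum_indep)
    show "indep_vars (\<lambda>_. borel) (gain_component Z B) T"
      unfolding T_def n_def by (rule indep_gain_components)
    show "(\<integral>\<^sup>+\<omega>. ennreal (gain_component Z B t \<omega>) \<partial>M) = ennreal (m t)"
      and "(\<integral>\<^sup>+\<omega>. ennreal ((gain_component Z B t \<omega>)\<^sup>2) \<partial>M) = ennreal (s t)" if "t \<in> T" for t
      using that by (auto simp: T_def n_def m_def s_def gain_component_def nn_integral_cmod_Hd
          nn_integral_cmod_Hd_power2 nn_integral_cmod_vgrp nn_integral_cmod_vgrp_power2)
  qed (use B_pos vgrp_mean_pos[OF B_pos] \<beta>d \<beta>l in \<open>auto simp: T_def c_def m_def s_def gain_component_def
      split: option.split\<close>)
  moreover have "(\<Sum>t\<in>T. c t * gain_component Z B t \<omega>)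
      = sqrt \<beta>d * cmod (Z Hd \<omega>) + sqrt \<beta>l * (\<Sum>i<n. cmod (vgrp Z B i \<omega>))" for \<omega>
    by (simp add: sum_T c_def gain_component_def sum_distrib_left)
  moreover have "(\<Sum>t\<in>T. c t * m t)\<^sup>2 + (\<Sum>t\<in>T. (c t)\<^sup>2 * (s t - (m t)\<^sup>2)) = gain_bound_mean B n \<beta>d \<beta>l"
  proof -
    have "sqrt (pi * \<beta>d * \<beta>l) = sqrt pi * sqrt \<beta>d * sqrt \<beta>l"
      by (simp add: real_sqrt_mult)
    then show ?thesis
      using \<beta>d \<beta>l by (simp add: gain_bound_mean_def sum_T c_def m_def s_def power2_sum
          power_mult_distrib power_divide) (simp add: algebra_simps)
  qed
  ultimately show ?thesis
    by (simp add: n_def)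
qed

lemma nn_integral_log_eff_gain_le:
  assumes "0 \<le> \<beta>d" "0 \<le> \<beta>l" "0 < \<gamma>"
  shows "(\<integral>\<^sup>+\<omega>. ennreal (log 2 (1 + \<gamma> * eff_gain Z B (K div B) P \<beta>d \<beta>l x \<omega>)) \<partial>M)
       \<le> ennreal (log 2 (1 + \<gamma> * gain_bound_mean B (K div B) \<beta>d \<beta>l))"
  using assms eff_gain_le[OF assms(1,2)] B_pos
  by (intro nn_integral_log_one_plus_le[OF borel_measurable_gain_bound nn_integral_gain_bound])
    (simp_all add: gain_bound_mean_nonneg eff_gain_def)

end

theorem proposition1:
  fixes M :: "'a measure" and Z :: "chan_idx \<Rightarrow> 'a \<Rightarrow> complex"
    and K B Tc :: nat and \<beta>d \<beta>l P \<sigma>2 \<gamma> :: real and x :: "nat \<Rightarrow> complex"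
  assumes "prob_space M"
    and "1 \<le> K" and "1 \<le> B" and "B \<le> K"
    and "Tc > K div B + 1"
    and "\<beta>d > 0" and "\<beta>l > 0" and "P > 0" and "\<sigma>2 > 0" and "\<gamma> > 0"
    and "\<forall>m < K div B + 1. cmod (x m) = 1"
    and "prob_space.indep_vars M (\<lambda>_. borel) Z
           ({H k | k. k < K} \<union> {G k | k. k < K} \<union> {Hd} \<union> {N m | m. m < K div B + 1})"
    and "\<forall>k < K. CN_distributed M (Z (H k)) 1"
    and "\<forall>k < K. CN_distributed M (Z (G k)) 1"
    and "CN_distributed M (Z Hd) 1"
    and "\<forall>m < K div B + 1. CN_distributed M (Z (N m)) \<sigma>2"
  shows
    "(let K' = K div B;
          z = sqrt pi * Gamma (real B + 1/2) / (2 * Gamma (real B));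
          \<xi>1 = \<beta>l * z\<^sup>2;
          \<xi>2 = \<beta>l * (real B - z\<^sup>2) + sqrt (pi * \<beta>d * \<beta>l) * z;
          pre = 1 - (real K' + 1) / real Tc;
          Rbar = pre * log 2 (1 + \<gamma> * (\<xi>1 * (real K')\<^sup>2 + \<xi>2 * real K' + \<beta>d))
      in ennreal pre *
           (\<integral>\<^sup>+ \<omega>. ennreal (log 2 (1 + \<gamma> * eff_gain Z B K' P \<beta>d \<beta>l x \<omega>)) \<partial>M)
         \<le> ennreal Rbar)"
proof -
  interpret grouped_ris_channel M Z K B
  proof -
    have "prob_space.indep_vars M (\<lambda>_. borel) Z ({H k | k. k < K} \<union> {G k | k. k < K} \<union> {Hd})"
      by (rule prob_space.indep_vars_subset[OF assms(1,12)]) blast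
    then show "grouped_ris_channel M Z K B"
      using assms by (simp add: grouped_ris_channel_def grouped_ris_channel_axioms_def)
  qed
  let ?pre = "1 - (real (K div B) + 1) / real Tc"
  let ?Q = "gain_bound_mean B (K div B) \<beta>d \<beta>l"
  have "ennreal ?pre * (\<integral>\<^sup>+\<omega>. ennreal (log 2 (1 + \<gamma> * eff_gain Z B (K div B) P \<beta>d \<beta>l x \<omega>)) \<partial>M)
      \<le> ennreal ?pre * ennreal (log 2 (1 + \<gamma> * ?Q))"
    using assms by (intro mult_left_mono nn_integral_log_eff_gain_le) simp_all
  also have "\<dots> = ennreal (?pre * log 2 (1 + \<gamma> * ?Q))"
  proof -
    have "0 \<le> log 2 (1 + \<gamma> * ?Q)"
      using assms gain_bound_mean_nonneg[of B \<beta>d \<beta>l "K div B"]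
      by (subst zero_le_log_cancel_iff) (auto intro: add_pos_nonneg)
    then show ?thesis
      using assms by (intro ennreal_mult[symmetric]) auto
  qed
  finally show ?thesis
    unfolding Let_def gain_bound_mean_def vgrp_mean_def .
qed

end
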